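(* Let $m \geq 2$ be an integer, let $k \in \{1, 2, \ldots, m-1\}$, and let $p \in \left(\frac{k}{m}, \frac{k+1}{m}\right]$. Then $$\mathbb{P}_{X \sim B(m,p)}\big[X \geq mp\big] \;\geq\; \mathbb{P}_{X \sim B(m,\frac{k}{m})}\big[X \geq k+1\big].$$
   Context: $B(m,p)$ denotes the binomial distribution with $m$ trials and success probability $p$: $\mathbb{P}[X=j]=\binom{m}{j}p^j(1-p)^{m-j}$ for $j=0,\dots,m$; its mean is $mp$. *)

theory Defs
  imports "HOL-Probability.Probability"
begin

end

theory Submission imports Defs begin

text \<open>For \<open>k/m < p \<le> (k+1)/m\<close> the event \<open>X \<ge> mp\<close> is exactly \<open>X \<ge> k+1\<close>, so the
claim is that the upper tail \<open>P[X \<ge> k+1]\<close> of \<open>B(m,p)\<close> grows with \<open>p\<close>. This follows by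
induction on the number of trials from the one-step recursion
\<open>P_{n+1}[X \<ge> j] = p P_n[X \<ge> j-1] + (1-p) P_n[X \<ge> j]\<close>, whose right-hand side is
increasing in \<open>p\<close> because \<open>P_n[X \<ge> j-1] \<ge> P_n[X \<ge> j]\<close>.\<close>

lemma prob_binomial_pmf_Suc:
  assumes "p \<in> {0..1}"
  shows "measure_pmf.prob (binomial_pmf (Suc n) p) A =
           p * measure_pmf.prob (binomial_pmf n p) (Suc -` A)
           + (1 - p) * measure_pmf.prob (binomial_pmf n p) A"
proof -
  have "binomial_pmf (Suc n) p =
          bernoulli_pmf p \<bind> (\<lambda>b. map_pmf (if b then Suc else id) (binomial_pmf n p))"
    using assms by (auto simp: binomial_pmf_Suc map_pmf_def intro!: bind_pmf_cong)
  then have "emeasure (binomial_pmf (Suc n) p) A =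
               ennreal p * emeasure (binomial_pmf n p) (Suc -` A)
               + ennreal (1 - p) * emeasure (binomial_pmf n p) A"
    using assms by (simp add: mult.commute)
  then show ?thesis
    using assms
    by (simp add: measure_pmf.emeasure_eq_measure ennreal_mult' [symmetric]
        ennreal_plus [symmetric] del: ennreal_plus)
qed

lemma prob_binomial_pmf_atLeast_mono:
  assumes "0 \<le> p" and "p \<le> q" and "q \<le> 1"
  shows "measure_pmf.prob (binomial_pmf n p) {j..} \<le> measure_pmf.prob (binomial_pmf n q) {j..}"
proof (induction n arbitrary: j)
  case 0
  then show ?case using assms by (simp add: binomial_pmf_0)
next
  case (Suc n)
  let ?P = "\<lambda>r i. measure_pmf.prob (binomial_pmf n r) {i..}"
  have preimage: "Suc -` {j..} = {j - 1..}" by auto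
  have tail_mono: "?P p j \<le> ?P p (j - 1)"
    by (intro measure_pmf.finite_measure_mono) auto
  have "measure_pmf.prob (binomial_pmf (Suc n) p) {j..} = ?P p j + p * (?P p (j - 1) - ?P p j)"
    using assms by (simp add: prob_binomial_pmf_Suc preimage algebra_simps)
  also have "\<dots> \<le> ?P p j + q * (?P p (j - 1) - ?P p j)"
    using assms tail_mono by (intro add_left_mono mult_right_mono) auto
  also have "\<dots> = q * ?P p (j - 1) + (1 - q) * ?P p j"
    by (simp add: algebra_simps)
  also have "\<dots> \<le> q * ?P q (j - 1) + (1 - q) * ?P q j"
    using assms Suc.IH by (intro add_mono mult_left_mono) auto
  also have "\<dots> = measure_pmf.prob (binomial_pmf (Suc n) q) {j..}"
    using assms by (simp add: prob_binomial_pmf_Suc preimage)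
  finally show ?case .
qed

lemma nat_real_ge_eq_atLeast_Suc:
  assumes "real k < t" and "t \<le> real k + 1"
  shows "{x :: nat. t \<le> real x} = {Suc k..}"
  using assms by (auto simp: Suc_le_eq)

theorem lemma1:
  fixes m k :: nat and p :: real
  assumes "m \<ge> 2" and "1 \<le> k" and "k \<le> m - 1"
    and "real k / real m < p" and "p \<le> (real k + 1) / real m"
  shows "measure_pmf.prob (binomial_pmf m p) {x. real x \<ge> real m * p}
           \<ge> measure_pmf.prob (binomial_pmf m (real k / real m)) {x. x \<ge> k + 1}"
proof -
  have m_pos: "real m > 0" using assms(1) by simp
  have lower: "real k < real m * p" and upper: "real m * p \<le> real k + 1"
    using assms(4,5) m_pos by (simp_all add: field_simps)
  have "real m * p \<le> real m * 1" using upper assms(1,3) by linarith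
  then have "p \<le> 1" using m_pos by simp
  then have "measure_pmf.prob (binomial_pmf m (real k / real m)) {Suc k..}
               \<le> measure_pmf.prob (binomial_pmf m p) {Suc k..}"
    using assms(4) by (intro prob_binomial_pmf_atLeast_mono) auto
  moreover have "{x. x \<ge> k + 1} = {Suc k..}" by auto
  ultimately show ?thesis
    using nat_real_ge_eq_atLeast_Suc[OF lower upper] by simp
qed

end
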